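(* For any $d_x,K\in\mathbb N$ and any $\gamma>0$, there exist a $\textsc{ReLU}$ network $f:\mathbb R^{d_x}\rightarrow\mathbb R$ of width $d_x+1$ and a set $\mathcal D_\gamma\subset[0,1]^{d_x}$ such that $f(x)=\mathtt{encode}_K(x)$ for all $x\in[0,1]^{d_x}\setminus\mathcal D_\gamma$, $\mu(\mathcal D_\gamma)<\gamma$, $f(\mathcal D_\gamma)\subset[0,1]$, and $f(\mathbb R^{d_x}\setminus[0,1]^{d_x})=\{1-2^{-d_xK}\}$, where $\mu$ denotes Lebesgue measure.
   Context: $\mathcal C_K:=\{0,2^{-K},2\cdot2^{-K},\dots,1-2^{-K}\}$, $q_K:[0,1]\to\mathcal C_K$, $q_K(t)=\max\{c\in\mathcal C_K:c\le t\}$. For $x\in[0,1]^{d_x}$, $\mathtt{encode}_K(x):=\sum_{i=1}^{d_x}q_K(x_i)\,2^{-(i-1)K}$. A $\textsc{ReLU}$ network is $t_L\circ\sigma_{L-1}\circ\cdots\circ\sigma_1\circ t_1$ with affine $t_\ell:\mathbb R^{d_{\ell-1}}\to\mathbb R^{d_\ell}$ and coordinatewise $\textsc{ReLU}$ $\sigma_\ell$; its width is $\max\{d_1,\dots,d_{L-1}\}$. *)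

theory Defs
  imports "HOL-Analysis.Analysis"
begin

(* Vectors in R^m are functions nat => real; only components < m matter. *)

definition dyadic_grid :: "nat \<Rightarrow> real set" where
  "dyadic_grid K = {real j / 2 ^ K | j. j < 2 ^ K}"

definition qK :: "nat \<Rightarrow> real \<Rightarrow> real" where
  "qK K t = Max {c \<in> dyadic_grid K. c \<le> t}"

(* encode_K(x) = sum_{i=1}^{d} q_K(x_i) 2^{-(i-1)K}, coordinates indexed 0..d-1 here *)
definition encode :: "nat \<Rightarrow> nat \<Rightarrow> (nat \<Rightarrow> real) \<Rightarrow> real" where
  "encode K d x = (\<Sum>i<d. qK K (x i) * (1/2) ^ (i * K))"

definition affine :: "(nat \<Rightarrow> nat \<Rightarrow> real) \<Rightarrow> (nat \<Rightarrow> real) \<Rightarrow> nat \<Rightarrow> (nat \<Rightarrow> real) \<Rightarrow> (nat \<Rightarrow> real)" where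
  "affine W b m x = (\<lambda>i. (\<Sum>j<m. W i j * x j) + b i)"

definition relu :: "(nat \<Rightarrow> real) \<Rightarrow> (nat \<Rightarrow> real)" where
  "relu x = (\<lambda>i. max 0 (x i))"

(* ds = [d_0, d_1, ..., d_L] layer dimensions; ls = [(W_1,b_1), ..., (W_L,b_L)] *)
fun net_eval :: "nat list \<Rightarrow> ((nat \<Rightarrow> nat \<Rightarrow> real) \<times> (nat \<Rightarrow> real)) list \<Rightarrow> (nat \<Rightarrow> real) \<Rightarrow> (nat \<Rightarrow> real)" where
  "net_eval (m # ms) [(W, b)] x = affine W b m x"
| "net_eval (m # ms) ((W, b) # l # ls) x = net_eval ms (l # ls) (relu (affine W b m x))"
| "net_eval _ _ x = x"

definition relu_net :: "nat \<Rightarrow> nat \<Rightarrow> nat list \<Rightarrow> ((nat \<Rightarrow> nat \<Rightarrow> real) \<times> (nat \<Rightarrow> real)) list \<Rightarrow> bool" where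
  "relu_net din dout ds ls \<longleftrightarrow> ls \<noteq> [] \<and> length ds = length ls + 1 \<and> hd ds = din \<and> last ds = dout"

definition net_width :: "nat list \<Rightarrow> nat" where
  "net_width ds = foldr max (butlast (tl ds)) 0"

end

theory Submission
  imports Defs
begin

text \<open>The network runs a straight-line program on \<open>dx + 1\<close> nonnegative registers, one hidden
  layer per instruction; register \<open>i\<close> starts with \<open>relu (x i + 1)\<close> and the coordinates are
  consumed one after the other. For coordinate \<open>j\<close> three layers compute a value that equals
  \<open>x j\<close> on \<open>[\<delta>, 1 - \<delta>]\<close> and is at least \<open>2 ^ (dx K)\<close> off \<open>[0, 1]\<close>; it is scaled by
  \<open>2 ^ -(j K)\<close> and added to the running sum, which a staircase of ReLU ramps of slope
  \<open>1 / (\<delta> 2 ^ K)\<close> then rounds down to the grid of mesh \<open>2 ^ -((j + 1) K)\<close>. The rounding is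
  exact while all coordinates keep distance \<open>\<delta>\<close> from the points \<open>h / 2 ^ K\<close>, and it returns 1
  once its argument reaches 1, so a single coordinate outside \<open>[0, 1]\<close> saturates the
  output. The exceptional set consists of \<open>dx (2 ^ K + 1)\<close> slabs of width \<open>2 \<delta>\<close>.\<close>

text \<open>\<open>Assign a i1 c1 i2 c2 i3 c3 b\<close> is the hidden layer that overwrites register \<open>a\<close> by
  \<open>relu (c1 * v i1 + c2 * v i2 + c3 * v i3 + b)\<close> and passes every other register through the
  identity, hence unchanged as long as it is nonnegative.\<close>

datatype instr = Assign nat nat real nat real nat real real

fun instr_weights :: "instr \<Rightarrow> nat \<Rightarrow> nat \<Rightarrow> real" where
  "instr_weights (Assign a i1 c1 i2 c2 i3 c3 b) = (\<lambda>i j. if i = a then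
      (if j = i1 then c1 else 0) + (if j = i2 then c2 else 0) + (if j = i3 then c3 else 0)
     else if i = j then 1 else 0)"

fun instr_bias :: "instr \<Rightarrow> nat \<Rightarrow> real" where
  "instr_bias (Assign a i1 c1 i2 c2 i3 c3 b) = (\<lambda>i. if i = a then b else 0)"

definition exec_instr :: "nat \<Rightarrow> instr \<Rightarrow> (nat \<Rightarrow> real) \<Rightarrow> (nat \<Rightarrow> real)" where
  "exec_instr n p v = relu (affine (instr_weights p) (instr_bias p) n v)"

fun exec_prog :: "nat \<Rightarrow> instr list \<Rightarrow> (nat \<Rightarrow> real) \<Rightarrow> (nat \<Rightarrow> real)" where
  "exec_prog n [] v = v"
| "exec_prog n (p # ps) v = exec_prog n ps (exec_instr n p v)"

lemma exec_prog_append: "exec_prog n (ps @ qs) v = exec_prog n qs (exec_prog n ps v)"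
  by (induction ps arbitrary: v) auto

lemma exec_instr_Assign:
  assumes "i1 < n" "i2 < n" "i3 < n"
  shows "exec_instr n (Assign a i1 c1 i2 c2 i3 c3 b) v i =
    (if i = a then max 0 (c1 * v i1 + c2 * v i2 + c3 * v i3 + b)
     else if i < n then max 0 (v i) else 0)"
  using assms
  by (simp add: exec_instr_def relu_def affine_def distrib_right sum.distrib
      if_distrib[where f = "\<lambda>z. z * _"] cong: if_cong)

lemma exec_instr_nonneg: "exec_instr n p v i \<ge> 0"
  by (simp add: exec_instr_def relu_def)

lemma exec_prog_nonneg: "(\<And>i. v i \<ge> 0) \<Longrightarrow> exec_prog n ps v i \<ge> 0"
  by (induction ps arbitrary: v) (auto simp: exec_instr_nonneg)

lemma net_eval_Cons:
  "ls \<noteq> [] \<Longrightarrow> net_eval (m # ms) ((W, b) # ls) x = net_eval ms ls (relu (affine W b m x))"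
  by (cases ls) auto

lemma net_eval_exec_prog:
  "net_eval (n # replicate (length ps) n @ [d])
     (map (\<lambda>p. (instr_weights p, instr_bias p)) ps @ [(W, b)]) v = affine W b n (exec_prog n ps v)"
  by (induction ps arbitrary: v) (simp_all add: net_eval_Cons exec_instr_def)

text \<open>\<open>ramp m \<theta> k\<close> is the line of slope \<open>1 / \<theta>\<close> through \<open>((k - \<theta>) / 2 ^ m, (k - 1) / 2 ^ m)\<close>
  and \<open>(k / 2 ^ m, k / 2 ^ m)\<close>; clipping these ramps gives a continuous staircase which agrees
  with rounding down to the grid of mesh \<open>2 ^ -m\<close> outside the \<open>\<theta> 2 ^ -m\<close>-neighbourhoods of
  the grid points.\<close>

definition ramp :: "nat \<Rightarrow> real \<Rightarrow> nat \<Rightarrow> real \<Rightarrow> real" where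
  "ramp m \<theta> k w = (real k - 1 + (2 ^ m * w - real k + \<theta>) / \<theta>) / 2 ^ m"

fun staircase :: "nat \<Rightarrow> real \<Rightarrow> nat \<Rightarrow> real \<Rightarrow> real" where
  "staircase m \<theta> 0 w = 0"
| "staircase m \<theta> (Suc k) w =
    min (real (Suc k) / 2 ^ m) (max (staircase m \<theta> k w) (ramp m \<theta> (Suc k) w))"

definition soft_floor :: "nat \<Rightarrow> real \<Rightarrow> real \<Rightarrow> real" where
  "soft_floor m \<theta> w = staircase m \<theta> (2 ^ m) w"

lemma ramp_eq: "\<theta> > 0 \<Longrightarrow> ramp m \<theta> k w = w / \<theta> + ramp m \<theta> k 0"
  unfolding ramp_def by (simp add: field_simps)

lemma staircase_nonneg: "staircase m \<theta> k w \<ge> 0"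
  by (induction k) auto

lemma soft_floor_nonneg: "soft_floor m \<theta> w \<ge> 0"
  by (simp add: soft_floor_def staircase_nonneg)

lemma soft_floor_eq_1:
  assumes "\<theta> > 0" "w \<ge> 1"
  shows "soft_floor m \<theta> w = 1"
proof -
  obtain N where N: "(2::nat) ^ m = Suc N"
    using not0_implies_Suc by (metis power_not_zero zero_neq_numeral)
  have NR: "real (Suc N) = 2 ^ m"
    by (metis N of_nat_numeral of_nat_power)
  have "2 ^ m * w - 2 ^ m \<ge> (0::real)"
    using assms(2) by simp
  then have "(2 ^ m * w - 2 ^ m + \<theta>) / \<theta> \<ge> 1"
    using assms(1) by simp
  then have "ramp m \<theta> (Suc N) w \<ge> 1"
    unfolding ramp_def NR by (simp add: field_simps)
  then show ?thesis
    unfolding soft_floor_def N using NR by simp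
qed

lemma staircase_eq_floor:
  assumes "0 < \<theta>" "\<theta> \<le> 1" "0 \<le> r" "r \<le> 1 - \<theta>" "w = (real h + r) / 2 ^ m"
  shows "staircase m \<theta> k w = real (min k h) / 2 ^ m"
proof (induction k)
  case (Suc k)
  have ramp_Suc: "ramp m \<theta> (Suc k) w = (real k + (real h + r - real (Suc k) + \<theta>) / \<theta>) / 2 ^ m"
    unfolding ramp_def assms(5) by simp
  show ?case
  proof (cases "Suc k \<le> h")
    case True
    then have "(real h + r - real (Suc k) + \<theta>) / \<theta> \<ge> 1"
      using assms by simp
    then have "ramp m \<theta> (Suc k) w \<ge> real (Suc k) / 2 ^ m"
      unfolding ramp_Suc by (simp add: divide_right_mono)
    then show ?thesis
      using Suc True by (simp add: min_absorb1)
  next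
    case False
    then have "real h - real k \<le> 0"
      by linarith
    have "(real h + r - real (Suc k) + \<theta>) / \<theta> \<le> (real h - real k) / \<theta>"
      using assms by (simp add: divide_right_mono)
    also have "\<dots> \<le> real h - real k"
      using mult_left_mono_neg[OF assms(2) \<open>real h - real k \<le> 0\<close>] assms(1)
      by (simp add: divide_le_eq)
    finally have "ramp m \<theta> (Suc k) w \<le> real h / 2 ^ m"
      unfolding ramp_Suc by (simp add: divide_right_mono)
    then show ?thesis
      using Suc False by (simp add: min_absorb2 divide_right_mono)
  qed
qed simp

lemma soft_floor_eq_floor:
  assumes "0 < \<theta>" "\<theta> \<le> 1" "0 \<le> r" "r \<le> 1 - \<theta>" "h < 2 ^ m"
  shows "soft_floor m \<theta> ((real h + r) / 2 ^ m) = real h / 2 ^ m"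
  using staircase_eq_floor[OF assms(1-4), where h = h and m = m and k = "2 ^ m"] assms(5)
  by (simp add: soft_floor_def)

text \<open>Computed from \<open>t = relu (x + 1)\<close> by the layers of \<open>detector_prog\<close> below. Shifting the
  input by 1 lets \<open>x \<in> [0, 1]\<close> pass the input ReLU intact, while every \<open>x < 0\<close> still gives
  \<open>t < 1\<close>, which the detector turns into a value of at least \<open>M \<delta>\<close>.\<close>

definition detector :: "real \<Rightarrow> real \<Rightarrow> real \<Rightarrow> real" where
  "detector M \<delta> t = max 0 (t - 1 + M * max 0 (1 + \<delta> - t))
     + M * max 0 (max 0 (t - 1 + M * max 0 (1 + \<delta> - t)) - M * max 0 (1 + \<delta> - t) - 1 + \<delta>)"

lemma detector_nonneg: "M \<ge> 0 \<Longrightarrow> detector M \<delta> t \<ge> 0"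
  unfolding detector_def by simp

lemma detector_eq:
  assumes "\<delta> \<le> y" "y \<le> 1 - \<delta>" "M \<ge> 1" "0 \<le> \<delta>"
  shows "detector M \<delta> (max 0 (y + 1)) = y"
  using assms unfolding detector_def by auto

lemma detector_ge:
  assumes "y < 0 \<or> y > 1" "M \<ge> 1" "\<delta> \<ge> 0"
  shows "detector M \<delta> (max 0 (y + 1)) \<ge> M * \<delta>"
proof -
  define t where "t = max 0 (y + 1)"
  have inner: "max 0 (t - 1 + M * max 0 (1 + \<delta> - t)) = t - 1 + M * max 0 (1 + \<delta> - t)"
  proof (cases "t \<ge> 1")
    case False
    then have "M * max 0 (1 + \<delta> - t) \<ge> 1 * (1 - t)"
      using assms by (intro mult_mono) auto
    then show ?thesis by simp
  qed (use assms in \<open>simp add: max_def\<close>)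
  have "detector M \<delta> t = t - 1 + M * max 0 (1 + \<delta> - t) + M * max 0 (t - 2 + \<delta>)"
    unfolding detector_def inner by (simp add: algebra_simps)
  also have "\<dots> \<ge> M * \<delta>"
  proof (cases "y < 0")
    case True
    then have t: "0 \<le> t" "t < 1"
      unfolding t_def by auto
    have "M * max 0 (1 + \<delta> - t) = M * \<delta> + M * (1 - t)"
      using t assms by (simp add: max_def algebra_simps)
    moreover have "M * (1 - t) \<ge> 1 * (1 - t)"
      using t assms by (intro mult_right_mono) auto
    then have "M * (1 - t) \<ge> 1 - t"
      by simp
    moreover have "M * max 0 (t - 2 + \<delta>) \<ge> 0"
      using assms by simp
    ultimately show ?thesis by linarith
  next
    case False
    then have t: "t = y + 1" "y > 1"
      using assms unfolding t_def by auto
    have "M * max 0 (t - 2 + \<delta>) \<ge> M * \<delta>"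
      using t assms by (intro mult_left_mono) auto
    moreover have "M * max 0 (1 + \<delta> - t) \<ge> 0"
      using assms by simp
    ultimately show ?thesis
      using t by linarith
  qed
  finally show ?thesis
    unfolding t_def .
qed

text \<open>Register \<open>s\<close> holds \<open>k / 2 ^ m - staircase m \<theta> k (v u)\<close>. With \<open>G = staircase m \<theta> k\<close> and
  \<open>L = ramp m \<theta> (k + 1)\<close>, the two layers of a step compute \<open>relu (G - L)\<close> and then
  \<open>relu ((k + 1) / 2 ^ m - L - relu (G - L)) = (k + 1) / 2 ^ m - min ((k + 1) / 2 ^ m) (max G L)\<close>.\<close>

fun staircase_prog :: "nat \<Rightarrow> real \<Rightarrow> nat \<Rightarrow> nat \<Rightarrow> nat \<Rightarrow> instr list" where
  "staircase_prog m \<theta> u s 0 = [Assign s s 0 s 0 s 0 0]"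
| "staircase_prog m \<theta> u s (Suc k) = staircase_prog m \<theta> u s k @
    [Assign s s (-1) u (-1 / \<theta>) u 0 (real k / 2 ^ m - ramp m \<theta> (Suc k) 0),
     Assign s s (-1) u (-1 / \<theta>) u 0 (real (Suc k) / 2 ^ m - ramp m \<theta> (Suc k) 0)]"

lemma exec_staircase_prog:
  assumes "u < n" "s < n" "u \<noteq> s" "\<theta> > 0" "\<And>i. v i \<ge> 0"
  shows "(\<forall>i<n. i \<noteq> s \<longrightarrow> exec_prog n (staircase_prog m \<theta> u s k) v i = v i) \<and>
    real k / 2 ^ m - exec_prog n (staircase_prog m \<theta> u s k) v s = staircase m \<theta> k (v u)"
proof (induction k)
  case 0
  show ?case
    using assms by (simp add: exec_instr_Assign)
next
  case (Suc k)
  define V where "V = exec_prog n (staircase_prog m \<theta> u s k) v"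
  define V1 where
    "V1 = exec_instr n (Assign s s (-1) u (-1 / \<theta>) u 0 (real k / 2 ^ m - ramp m \<theta> (Suc k) 0)) V"
  define V2 where
    "V2 = exec_instr n (Assign s s (-1) u (-1 / \<theta>) u 0 (real (Suc k) / 2 ^ m - ramp m \<theta> (Suc k) 0)) V1"
  have V_nonneg: "V i \<ge> 0" for i
    unfolding V_def using assms(5) by (rule exec_prog_nonneg)
  have V_other: "\<forall>i<n. i \<noteq> s \<longrightarrow> V i = v i"
    and V_s: "real k / 2 ^ m - V s = staircase m \<theta> k (v u)"
    using Suc unfolding V_def by auto
  define G where "G = staircase m \<theta> k (v u)"
  define L where "L = ramp m \<theta> (Suc k) (v u)"
  have L_eq: "L = v u / \<theta> + ramp m \<theta> (Suc k) 0"
    unfolding L_def using assms(4) by (rule ramp_eq)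
  have V1_other: "\<forall>i<n. i \<noteq> s \<longrightarrow> V1 i = v i"
    unfolding V1_def using assms V_nonneg V_other by (simp add: exec_instr_Assign)
  have "V1 s = max 0 (G - L)"
    unfolding V1_def G_def using assms V_other V_s L_eq
    by (simp add: exec_instr_Assign algebra_simps)
  then have "V2 s = max 0 (real (Suc k) / 2 ^ m - L - max 0 (G - L))"
    unfolding V2_def using assms V1_other L_eq by (simp add: exec_instr_Assign algebra_simps)
  then have "real (Suc k) / 2 ^ m - V2 s = staircase m \<theta> (Suc k) (v u)"
    unfolding G_def L_def by (simp add: max_def min_def)
  moreover have "\<forall>i<n. i \<noteq> s \<longrightarrow> V2 i = v i"
    unfolding V2_def using assms V1_other by (simp add: exec_instr_Assign)
  moreover have "exec_prog n (staircase_prog m \<theta> u s (Suc k)) v = V2"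
    unfolding V2_def V1_def V_def by (simp add: exec_prog_append)
  ultimately show ?case by simp
qed

text \<open>The block for coordinate \<open>j\<close> reads register \<open>j\<close> and works in register \<open>scratch dx j\<close>:
  the extra register \<open>dx\<close> for \<open>j = 0\<close>, afterwards the register of the coordinate consumed
  before. That register then stores the running sum \<open>acc\<close> in the complemented form
  \<open>1 - acc\<close> in which the staircase program leaves it.\<close>

definition scratch :: "nat \<Rightarrow> nat \<Rightarrow> nat" where
  "scratch dx j = (if j = 0 then dx else j - 1)"

definition acc :: "nat \<Rightarrow> (nat \<Rightarrow> real) \<Rightarrow> nat \<Rightarrow> real" where
  "acc dx v j = (if j = 0 then 0 else 1 - v (scratch dx (j - 1)))"

definition detector_prog :: "nat \<Rightarrow> nat \<Rightarrow> real \<Rightarrow> real \<Rightarrow> nat \<Rightarrow> instr list" where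
  "detector_prog dx K \<delta> M j =
    [Assign (scratch dx j) j (-1) j 0 j 0 (1 + \<delta>),
     Assign j j 1 (scratch dx j) M j 0 (-1),
     Assign (scratch dx j) j 1 (scratch dx j) (-M) j 0 (\<delta> - 1),
     Assign j (scratch dx (j - 1)) (if j = 0 then 0 else -1) j (1 / 2 ^ (j * K))
       (scratch dx j) (M / 2 ^ (j * K)) (if j = 0 then 0 else 1)]"

definition coord_block :: "nat \<Rightarrow> nat \<Rightarrow> real \<Rightarrow> real \<Rightarrow> real \<Rightarrow> nat \<Rightarrow> instr list" where
  "coord_block dx K \<theta> \<delta> M j =
    detector_prog dx K \<delta> M j @ staircase_prog (Suc j * K) \<theta> j (scratch dx j) (2 ^ (Suc j * K))"

lemma exec_detector_prog:
  assumes "j < dx" "\<And>i. v i \<ge> 0"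
  shows "exec_prog (Suc dx) (detector_prog dx K \<delta> M j) v j
      = max 0 (acc dx v j + detector M \<delta> (v j) / 2 ^ (j * K))"
    and "\<And>i. i < Suc dx \<Longrightarrow> i \<noteq> j \<Longrightarrow> i \<noteq> scratch dx j \<Longrightarrow>
      exec_prog (Suc dx) (detector_prog dx K \<delta> M j) v i = v i"
proof -
  let ?n = "Suc dx" and ?s = "scratch dx j" and ?w = "scratch dx (j - 1)"
  have idx: "j < ?n" "?s < ?n" "?w < ?n" "?s \<noteq> j"
    using assms(1) by (auto simp: scratch_def)
  define V1 where "V1 = exec_instr ?n (Assign ?s j (-1) j 0 j 0 (1 + \<delta>)) v"
  define V2 where "V2 = exec_instr ?n (Assign j j 1 ?s M j 0 (-1)) V1"
  define V3 where "V3 = exec_instr ?n (Assign ?s j 1 ?s (-M) j 0 (\<delta> - 1)) V2"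
  define V4 where "V4 = exec_instr ?n (Assign j ?w (if j = 0 then 0 else -1) j (1 / 2 ^ (j * K))
      ?s (M / 2 ^ (j * K)) (if j = 0 then 0 else 1)) V3"
  have run: "exec_prog ?n (detector_prog dx K \<delta> M j) v = V4"
    unfolding detector_prog_def V4_def V3_def V2_def V1_def by simp
  have V1: "V1 ?s = max 0 (1 + \<delta> - v j)" "\<And>i. i < ?n \<Longrightarrow> i \<noteq> ?s \<Longrightarrow> V1 i = v i"
    unfolding V1_def using idx assms(2) by (simp_all add: exec_instr_Assign)
  have V2: "V2 j = max 0 (v j - 1 + M * max 0 (1 + \<delta> - v j))"
      "\<And>i. i < ?n \<Longrightarrow> i \<noteq> j \<Longrightarrow> V2 i = V1 i"
    unfolding V2_def using idx V1
    by (simp_all add: exec_instr_Assign V1_def exec_instr_nonneg algebra_simps)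
  have V3: "V3 ?s = max 0 (V2 j - M * max 0 (1 + \<delta> - v j) - 1 + \<delta>)"
      "\<And>i. i < ?n \<Longrightarrow> i \<noteq> ?s \<Longrightarrow> V3 i = V2 i"
    unfolding V3_def using idx V1 V2
    by (simp_all add: exec_instr_Assign V2_def exec_instr_nonneg algebra_simps)
  have "V3 ?w = v ?w" if "j \<noteq> 0"
  proof -
    have "?w \<noteq> j" "?w \<noteq> ?s"
      using that assms(1) by (auto simp: scratch_def)
    then show ?thesis
      using idx V1(2) V2(2) V3(2) by simp
  qed
  then have "(if j = 0 then 0 else -1) * V3 ?w + (if j = 0 then 0 else 1) = acc dx v j"
    by (simp add: acc_def)
  moreover have
    "1 / 2 ^ (j * K) * V3 j + M / 2 ^ (j * K) * V3 ?s = detector M \<delta> (v j) / 2 ^ (j * K)"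
    using idx V2 V3 unfolding detector_def by (simp add: field_simps)
  ultimately show "exec_prog ?n (detector_prog dx K \<delta> M j) v j
      = max 0 (acc dx v j + detector M \<delta> (v j) / 2 ^ (j * K))"
    unfolding run V4_def using idx by (simp add: exec_instr_Assign algebra_simps)
  show "exec_prog ?n (detector_prog dx K \<delta> M j) v i = v i" if "i < ?n" "i \<noteq> j" "i \<noteq> ?s" for i
    unfolding run V4_def using idx that V1(2) V2(2) V3(2) assms(2)
    by (simp add: exec_instr_Assign)
qed

lemma exec_coord_block:
  assumes "j < dx" "\<theta> > 0" "\<And>i. v i \<ge> 0"
  shows "acc dx (exec_prog (Suc dx) (coord_block dx K \<theta> \<delta> M j) v) (Suc j)
      = soft_floor (Suc j * K) \<theta> (max 0 (acc dx v j + detector M \<delta> (v j) / 2 ^ (j * K)))"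
    and "\<And>i. i < Suc dx \<Longrightarrow> i \<noteq> j \<Longrightarrow> i \<noteq> scratch dx j \<Longrightarrow>
      exec_prog (Suc dx) (coord_block dx K \<theta> \<delta> M j) v i = v i"
proof -
  define V where "V = exec_prog (Suc dx) (detector_prog dx K \<delta> M j) v"
  have run: "exec_prog (Suc dx) (coord_block dx K \<theta> \<delta> M j) v
      = exec_prog (Suc dx) (staircase_prog (Suc j * K) \<theta> j (scratch dx j) (2 ^ (Suc j * K))) V"
    unfolding coord_block_def V_def by (simp add: exec_prog_append)
  have idx: "j < Suc dx" "scratch dx j < Suc dx" "j \<noteq> scratch dx j"
    using assms(1) by (auto simp: scratch_def)
  have "V i \<ge> 0" for i
    unfolding V_def using assms(3) by (rule exec_prog_nonneg)
  note stair = exec_staircase_prog[OF idx assms(2) this, of "Suc j * K" "2 ^ (Suc j * K)"]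
  show "acc dx (exec_prog (Suc dx) (coord_block dx K \<theta> \<delta> M j) v) (Suc j)
      = soft_floor (Suc j * K) \<theta> (max 0 (acc dx v j + detector M \<delta> (v j) / 2 ^ (j * K)))"
    using stair exec_detector_prog(1)[OF assms(1,3)]
    unfolding run acc_def V_def soft_floor_def by simp
  show "exec_prog (Suc dx) (coord_block dx K \<theta> \<delta> M j) v i = v i"
    if "i < Suc dx" "i \<noteq> j" "i \<noteq> scratch dx j" for i
    using stair exec_detector_prog(2)[OF assms(1,3) that] that unfolding run V_def by simp
qed

definition off_grid :: "real \<Rightarrow> nat \<Rightarrow> real \<Rightarrow> bool" where
  "off_grid \<delta> K y \<longleftrightarrow> 0 \<le> y \<and> y \<le> 1 \<and> (\<forall>h \<le> (2::nat) ^ K. \<delta> < \<bar>y - real h / 2 ^ K\<bar>)"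

lemma qK_eq_grid_point:
  assumes "h < 2 ^ K" "real h / 2 ^ K \<le> y" "y < (real h + 1) / 2 ^ K"
  shows "qK K y = real h / 2 ^ K"
  unfolding qK_def
proof (rule Max_eqI)
  have "dyadic_grid K = (\<lambda>j. real j / 2 ^ K) ` {..<2 ^ K}"
    unfolding dyadic_grid_def by auto
  then show "finite {c \<in> dyadic_grid K. c \<le> y}"
    by simp
  show "real h / 2 ^ K \<in> {c \<in> dyadic_grid K. c \<le> y}"
    using assms unfolding dyadic_grid_def by auto
  fix c
  assume "c \<in> {c \<in> dyadic_grid K. c \<le> y}"
  then obtain j where c: "c = real j / 2 ^ K" "c \<le> y"
    unfolding dyadic_grid_def by auto
  then have "real j / 2 ^ K < (real h + 1) / 2 ^ K"
    using assms(3) by simp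
  then have "real j < real h + 1"
    by (simp add: divide_strict_right_mono_neg field_simps)
  then show "c \<le> real h / 2 ^ K"
    unfolding c(1) by (simp add: divide_right_mono)
qed

lemma off_grid_bounds:
  assumes "off_grid \<delta> K y"
  shows "\<delta> \<le> y" "y \<le> 1 - \<delta>"
  using assms unfolding off_grid_def by (force dest: spec[of _ 0] spec[of _ "2 ^ K"])+

lemma off_grid_digit:
  assumes "off_grid \<delta> K y" "\<delta> \<ge> 0"
  obtains h r where "h < 2 ^ K" "y = (real h + r) / 2 ^ K"
    "\<delta> * 2 ^ K \<le> r" "r \<le> 1 - \<delta> * 2 ^ K" "qK K y = real h / 2 ^ K"
proof -
  have y: "0 \<le> y" "y \<le> 1" and far: "\<And>h. h \<le> 2 ^ K \<Longrightarrow> \<delta> < \<bar>y - real h / 2 ^ K\<bar>"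
    using assms(1) unfolding off_grid_def by auto
  define h where "h = nat \<lfloor>2 ^ K * y\<rfloor>"
  define r where "r = 2 ^ K * y - real h"
  have floor: "real h \<le> 2 ^ K * y" "2 ^ K * y < real h + 1"
    unfolding h_def using y by (auto simp: of_nat_nat)
  then have r: "0 \<le> r" "r < 1"
    unfolding r_def by auto
  have "y < 1"
    using far[of "2 ^ K"] assms(2) y by auto
  then have "2 ^ K * y < 2 ^ K * 1"
    by (intro mult_strict_left_mono) auto
  then have "real h < 2 ^ K"
    using floor(1) by linarith
  then have h: "h < 2 ^ K"
    by (metis of_nat_less_iff of_nat_numeral of_nat_power)
  have y_eq: "y = (real h + r) / 2 ^ K"
    unfolding r_def by simp
  have "\<delta> < \<bar>y - real h / 2 ^ K\<bar>" "\<delta> < \<bar>y - real (Suc h) / 2 ^ K\<bar>"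
    using far[of h] far[of "Suc h"] h by (simp_all add: Suc_le_eq)
  moreover have "y - real h / 2 ^ K = r / 2 ^ K" "y - real (Suc h) / 2 ^ K = - ((1 - r) / 2 ^ K)"
    unfolding y_eq by (simp_all add: field_simps)
  ultimately have "\<delta> < r / 2 ^ K" "\<delta> < (1 - r) / 2 ^ K"
    using r by simp_all
  then have "\<delta> * 2 ^ K \<le> r" "r \<le> 1 - \<delta> * 2 ^ K"
    by (simp_all add: field_simps)
  moreover have "qK K y = real h / 2 ^ K"
    using h r by (intro qK_eq_grid_point) (simp_all add: y_eq field_simps)
  ultimately show thesis
    using that h y_eq by blast
qed

lemma soft_floor_next_digit:
  assumes "0 < \<delta>" "\<delta> * 2 ^ K \<le> 1" "H < 2 ^ (j * K)" "off_grid \<delta> K y"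
  obtains H' :: nat where "H' < 2 ^ (Suc j * K)"
    "soft_floor (Suc j * K) (\<delta> * 2 ^ K) (real H / 2 ^ (j * K) + y / 2 ^ (j * K))
      = real H' / 2 ^ (Suc j * K)"
    "real H' / 2 ^ (Suc j * K) = real H / 2 ^ (j * K) + qK K y * (1 / 2) ^ (j * K)"
proof -
  obtain h r where h: "h < 2 ^ K" and y: "y = (real h + r) / 2 ^ K"
    and r: "\<delta> * 2 ^ K \<le> r" "r \<le> 1 - \<delta> * 2 ^ K" and q: "qK K y = real h / 2 ^ K"
    using off_grid_digit[OF assms(4)] assms(1) by auto
  define H' where "H' = 2 ^ K * H + h"
  have pow: "(2::'a::comm_semiring_1) ^ (Suc j * K) = 2 ^ K * 2 ^ (j * K)"
    by (simp add: power_add)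
  have "H' < 2 ^ K * (H + 1)"
    unfolding H'_def using h by simp
  also have "\<dots> \<le> 2 ^ (Suc j * K)"
    unfolding pow using assms(3) by (intro mult_left_mono) auto
  finally have H': "H' < 2 ^ (Suc j * K)" .
  have arg: "real H / 2 ^ (j * K) + y / 2 ^ (j * K) = (real H' + r) / 2 ^ (Suc j * K)"
    unfolding y H'_def pow by (simp add: field_simps)
  have "0 \<le> \<delta> * 2 ^ K"
    using assms(1) by simp
  then have "0 \<le> r"
    using r(1) by linarith
  then have "soft_floor (Suc j * K) (\<delta> * 2 ^ K) (real H / 2 ^ (j * K) + y / 2 ^ (j * K))
      = real H' / 2 ^ (Suc j * K)"
    unfolding arg using assms(1,2) r H' by (intro soft_floor_eq_floor) auto
  moreover have "real H' / 2 ^ (Suc j * K) = real H / 2 ^ (j * K) + qK K y * (1 / 2) ^ (j * K)"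
    unfolding q H'_def pow by (simp add: field_simps power_one_over)
  ultimately show thesis
    using that H' by blast
qed

lemma one_le_power_div:
  assumes "0 < \<delta>" "\<delta> * 2 ^ K \<le> 1"
  shows "1 \<le> (2::real) ^ n / \<delta>"
proof -
  have "\<delta> \<le> \<delta> * 2 ^ K"
    using assms(1) by simp
  then have "\<delta> \<le> 2 ^ n"
    using assms(2) one_le_power[of "2::real" n] by linarith
  then show ?thesis
    using assms(1) by simp
qed

definition encoder_blocks :: "nat \<Rightarrow> nat \<Rightarrow> real \<Rightarrow> nat \<Rightarrow> instr list" where
  "encoder_blocks dx K \<delta> j =
    concat (map (coord_block dx K (\<delta> * 2 ^ K) \<delta> (2 ^ (dx * K) / \<delta>)) [0..<j])"

definition input_weights :: "nat \<Rightarrow> nat \<Rightarrow> real" where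
  "input_weights i j = (if i = j then 1 else 0)"

definition input_bias :: "nat \<Rightarrow> nat \<Rightarrow> real" where
  "input_bias dx i = (if i < dx then 1 else 0)"

definition encoder_regs :: "nat \<Rightarrow> nat \<Rightarrow> real \<Rightarrow> (nat \<Rightarrow> real) \<Rightarrow> nat \<Rightarrow> nat \<Rightarrow> real" where
  "encoder_regs dx K \<delta> x j =
    exec_prog (Suc dx) (encoder_blocks dx K \<delta> j) (relu (affine input_weights (input_bias dx) dx x))"

lemma input_layer_apply:
  "relu (affine input_weights (input_bias dx) dx x) i = (if i < dx then max 0 (x i + 1) else 0)"
  by (simp add: relu_def affine_def input_weights_def input_bias_def
      if_distrib[where f = "\<lambda>z. z * _"] cong: if_cong)

lemma encoder_regs_nonneg: "encoder_regs dx K \<delta> x j i \<ge> 0"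
  unfolding encoder_regs_def by (rule exec_prog_nonneg) (simp add: relu_def)

lemma encoder_regs_Suc:
  "encoder_regs dx K \<delta> x (Suc j)
    = exec_prog (Suc dx) (coord_block dx K (\<delta> * 2 ^ K) \<delta> (2 ^ (dx * K) / \<delta>) j)
        (encoder_regs dx K \<delta> x j)"
  by (simp add: encoder_regs_def encoder_blocks_def exec_prog_append)

lemma encoder_regs_input:
  assumes "0 < \<delta>" "j \<le> i" "i < dx"
  shows "encoder_regs dx K \<delta> x j i = max 0 (x i + 1)"
  using assms(2)
proof (induction j)
  case 0
  show ?case
    using assms(3) by (simp add: encoder_regs_def encoder_blocks_def input_layer_apply)
next
  case (Suc j)
  then have "i \<noteq> scratch dx j"
    using assms(3) by (auto simp: scratch_def)
  then show ?case
    using Suc assms by (simp add: encoder_regs_Suc exec_coord_block(2) encoder_regs_nonneg)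
qed

lemma acc_encoder_regs_Suc:
  assumes "0 < \<delta>" "j < dx"
  shows "acc dx (encoder_regs dx K \<delta> x (Suc j)) (Suc j) = soft_floor (Suc j * K) (\<delta> * 2 ^ K)
      (max 0 (acc dx (encoder_regs dx K \<delta> x j) j
        + detector (2 ^ (dx * K) / \<delta>) \<delta> (max 0 (x j + 1)) / 2 ^ (j * K)))"
  using assms
  by (simp add: encoder_regs_Suc exec_coord_block(1) encoder_regs_nonneg encoder_regs_input)

lemma acc_encoder_regs_nonneg:
  assumes "0 < \<delta>" "j \<le> dx"
  shows "acc dx (encoder_regs dx K \<delta> x j) j \<ge> 0"
proof (cases j)
  case (Suc i)
  then show ?thesis
    using assms by (simp add: acc_encoder_regs_Suc soft_floor_nonneg)
qed (simp add: acc_def)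

lemma acc_encoder_regs_saturated:
  assumes "0 < \<delta>" "\<delta> * 2 ^ K \<le> 1" "j \<le> dx" "i < j" "x i < 0 \<or> x i > 1"
  shows "acc dx (encoder_regs dx K \<delta> x j) j = 1"
  using assms(3,4)
proof (induction j)
  case (Suc j)
  define M where "M = 2 ^ (dx * K) / \<delta>"
  have M: "M \<ge> 1" "M * \<delta> = 2 ^ (dx * K)"
    using one_le_power_div[OF assms(1,2)] assms(1) by (auto simp: M_def)
  have det: "detector M \<delta> (max 0 (x j + 1)) \<ge> 0"
    using M by (simp add: detector_nonneg)
  have "acc dx (encoder_regs dx K \<delta> x j) j + detector M \<delta> (max 0 (x j + 1)) / 2 ^ (j * K) \<ge> 1"
  proof (cases "i < j")
    case True
    then show ?thesis
      using Suc det by simp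
  next
    case False
    then have "i = j"
      using Suc.prems by simp
    then have "detector M \<delta> (max 0 (x j + 1)) \<ge> M * \<delta>"
      using detector_ge assms(1,5) M(1) by auto
    moreover have "M * \<delta> \<ge> 2 ^ (j * K)"
      unfolding M(2) using Suc.prems by (intro power_increasing) auto
    ultimately have "detector M \<delta> (max 0 (x j + 1)) / 2 ^ (j * K) \<ge> 1"
      by (simp add: le_divide_eq)
    moreover have "acc dx (encoder_regs dx K \<delta> x j) j \<ge> 0"
      using assms(1) Suc.prems by (intro acc_encoder_regs_nonneg) auto
    ultimately show ?thesis
      by linarith
  qed
  then show ?case
    using Suc.prems assms(1) by (simp add: acc_encoder_regs_Suc soft_floor_eq_1 M_def[symmetric])
qed simp

lemma acc_encoder_regs_eq_partial_encode:
  assumes "0 < \<delta>" "\<delta> * 2 ^ K \<le> 1" "j \<le> dx" "\<forall>i<j. off_grid \<delta> K (x i)"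
  shows "\<exists>H::nat. H < 2 ^ (j * K) \<and> acc dx (encoder_regs dx K \<delta> x j) j = real H / 2 ^ (j * K)
      \<and> acc dx (encoder_regs dx K \<delta> x j) j = (\<Sum>i<j. qK K (x i) * (1 / 2) ^ (i * K))"
  using assms(3,4)
proof (induction j)
  case (Suc j)
  then obtain H :: nat where H: "H < 2 ^ (j * K)"
      "acc dx (encoder_regs dx K \<delta> x j) j = real H / 2 ^ (j * K)"
      "acc dx (encoder_regs dx K \<delta> x j) j = (\<Sum>i<j. qK K (x i) * (1 / 2) ^ (i * K))"
    by auto
  have y: "off_grid \<delta> K (x j)"
    using Suc.prems by simp
  have "detector (2 ^ (dx * K) / \<delta>) \<delta> (max 0 (x j + 1)) = x j"
    using off_grid_bounds[OF y] one_le_power_div[OF assms(1,2)] assms(1)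
    by (intro detector_eq) auto
  moreover obtain H' :: nat where "H' < 2 ^ (Suc j * K)"
    "soft_floor (Suc j * K) (\<delta> * 2 ^ K) (real H / 2 ^ (j * K) + x j / 2 ^ (j * K))
      = real H' / 2 ^ (Suc j * K)"
    "real H' / 2 ^ (Suc j * K) = real H / 2 ^ (j * K) + qK K (x j) * (1 / 2) ^ (j * K)"
    using soft_floor_next_digit[OF assms(1,2) H(1) y] .
  moreover have "real H / 2 ^ (j * K) + x j / 2 ^ (j * K) \<ge> 0"
    using off_grid_bounds[OF y] assms(1) by simp
  ultimately show ?case
    using Suc.prems assms(1) H by (auto simp: acc_encoder_regs_Suc)
qed (simp add: acc_def)

definition encoder_prog :: "nat \<Rightarrow> nat \<Rightarrow> real \<Rightarrow> instr list" where
  "encoder_prog dx K \<delta> = encoder_blocks dx K \<delta> dx @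
    [Assign (scratch dx (dx - 1)) (scratch dx (dx - 1)) 1 (scratch dx (dx - 1)) 0
       (scratch dx (dx - 1)) 0 (- ((1 / 2) ^ (dx * K)))]"

definition encoder_dims :: "nat \<Rightarrow> nat \<Rightarrow> real \<Rightarrow> nat list" where
  "encoder_dims dx K \<delta> = dx # replicate (length (encoder_prog dx K \<delta>) + 1) (Suc dx) @ [1]"

text \<open>The last instruction and the output layer compute \<open>c - relu (c - acc) = min c acc\<close>
  for \<open>c = 1 - 2 ^ -(dx K)\<close>, which turns the saturated value 1 into \<open>c\<close>.\<close>

definition encoder_layers ::
  "nat \<Rightarrow> nat \<Rightarrow> real \<Rightarrow> ((nat \<Rightarrow> nat \<Rightarrow> real) \<times> (nat \<Rightarrow> real)) list" where
  "encoder_layers dx K \<delta> = (input_weights, input_bias dx)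
    # map (\<lambda>p. (instr_weights p, instr_bias p)) (encoder_prog dx K \<delta>)
    @ [(\<lambda>i j. if j = scratch dx (dx - 1) then -1 else 0, \<lambda>i. 1 - (1 / 2) ^ (dx * K))]"

lemma relu_net_encoder: "relu_net dx 1 (encoder_dims dx K \<delta>) (encoder_layers dx K \<delta>)"
  by (simp add: relu_net_def encoder_dims_def encoder_layers_def)

lemma net_width_encoder: "net_width (encoder_dims dx K \<delta>) = dx + 1"
proof -
  have "foldr max (replicate (Suc k) n) 0 = n" for k n :: nat
    by (induction k) auto
  then show ?thesis
    by (simp add: net_width_def encoder_dims_def)
qed

lemma net_eval_encoder:
  assumes "dx \<ge> 1"
  shows "net_eval (encoder_dims dx K \<delta>) (encoder_layers dx K \<delta>) x 0
    = min (1 - (1 / 2) ^ (dx * K)) (acc dx (encoder_regs dx K \<delta> x dx) dx)"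
proof -
  let ?s = "scratch dx (dx - 1)" and ?c = "1 - (1 / 2) ^ (dx * K) :: real"
  let ?V = "encoder_regs dx K \<delta> x dx"
  have s: "?s < Suc dx"
    using assms by (auto simp: scratch_def)
  have "net_eval (encoder_dims dx K \<delta>) (encoder_layers dx K \<delta>) x
      = affine (\<lambda>i j. if j = ?s then -1 else 0) (\<lambda>i. ?c) (Suc dx) (exec_prog (Suc dx)
          (encoder_prog dx K \<delta>) (relu (affine input_weights (input_bias dx) dx x)))"
    unfolding encoder_dims_def encoder_layers_def by (simp add: net_eval_Cons net_eval_exec_prog)
  also have "exec_prog (Suc dx) (encoder_prog dx K \<delta>) (relu (affine input_weights (input_bias dx) dx x))
      = exec_instr (Suc dx) (Assign ?s ?s 1 ?s 0 ?s 0 (- ((1 / 2) ^ (dx * K)))) ?V"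
    by (simp add: encoder_prog_def encoder_regs_def exec_prog_append)
  finally have "net_eval (encoder_dims dx K \<delta>) (encoder_layers dx K \<delta>) x 0
      = ?c - max 0 (?V ?s - (1 / 2) ^ (dx * K))"
    using s by (simp add: affine_def exec_instr_Assign if_distrib[where f = "\<lambda>z. z * _"] cong: if_cong)
  moreover have "acc dx ?V dx = 1 - ?V ?s"
    using assms by (simp add: acc_def)
  ultimately show ?thesis
    by (simp add: min_def max_def)
qed

lemma encoder_eq_encode:
  assumes "dx \<ge> 1" "0 < \<delta>" "\<delta> * 2 ^ K \<le> 1" "\<forall>i<dx. off_grid \<delta> K (x i)"
  shows "net_eval (encoder_dims dx K \<delta>) (encoder_layers dx K \<delta>) x 0 = encode K dx x"
proof -
  obtain H :: nat where H: "H < 2 ^ (dx * K)"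
      "acc dx (encoder_regs dx K \<delta> x dx) dx = real H / 2 ^ (dx * K)"
      "acc dx (encoder_regs dx K \<delta> x dx) dx = encode K dx x"
    using acc_encoder_regs_eq_partial_encode[OF assms(2,3) order_refl assms(4)]
    by (auto simp: encode_def)
  have "real H + 1 \<le> 2 ^ (dx * K)"
    using H(1) by (metis Suc_leI of_nat_Suc of_nat_le_iff of_nat_numeral of_nat_power add.commute)
  then have "real H / 2 ^ (dx * K) \<le> 1 - (1 / 2) ^ (dx * K)"
    by (simp add: field_simps power_one_over)
  then show ?thesis
    using H(2,3) by (simp add: net_eval_encoder[OF assms(1)])
qed

lemma encoder_outside_cube:
  assumes "dx \<ge> 1" "0 < \<delta>" "\<delta> * 2 ^ K \<le> 1" "i < dx" "x i < 0 \<or> x i > 1"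
  shows "net_eval (encoder_dims dx K \<delta>) (encoder_layers dx K \<delta>) x 0 = 1 - (1 / 2) ^ (dx * K)"
proof -
  have "acc dx (encoder_regs dx K \<delta> x dx) dx = 1"
    by (rule acc_encoder_regs_saturated[where i = i and x = x, OF assms(2,3) _ assms(4,5)]) simp
  then show ?thesis
    by (simp add: net_eval_encoder[OF assms(1)])
qed

lemma encoder_range:
  assumes "dx \<ge> 1" "0 < \<delta>"
  shows "net_eval (encoder_dims dx K \<delta>) (encoder_layers dx K \<delta>) x 0 \<in> {0..1}"
  using acc_encoder_regs_nonneg[OF assms(2) order_refl, of dx K x]
  by (simp add: net_eval_encoder[OF assms(1)] power_le_one min_le_iff_disj)

lemma encoder_image_outside_cube:
  assumes "dx \<ge> 1" "0 < \<delta>" "\<delta> * 2 ^ K \<le> 1"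
  shows "(\<lambda>x. net_eval (encoder_dims dx K \<delta>) (encoder_layers dx K \<delta>) x 0)
      ` (PiE {..<dx} (\<lambda>_. UNIV) - PiE {..<dx} (\<lambda>_. {0..1})) = {1 - (1 / 2) ^ (dx * K)}"
proof -
  let ?f = "\<lambda>x. net_eval (encoder_dims dx K \<delta>) (encoder_layers dx K \<delta>) x 0"
  let ?O = "PiE {..<dx} (\<lambda>_. UNIV) - PiE {..<dx} (\<lambda>_. {0..1::real})"
  have "0 < dx"
    using assms(1) by simp
  then have witness: "restrict (\<lambda>_. 2) {..<dx} \<in> ?O"
    by (auto simp: PiE_iff)
  have "?f x = 1 - (1 / 2) ^ (dx * K)" if "x \<in> ?O" for x
  proof -
    have "\<not> (\<forall>i\<in>{..<dx}. x i \<in> {0..1})"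
      using that by (auto simp: PiE_iff)
    then obtain i where "i < dx" "x i \<notin> {0..1}"
      by blast
    then have "i < dx" "x i < 0 \<or> x i > 1"
      by auto
    then show ?thesis
      by (rule encoder_outside_cube[OF assms])
  qed
  then show ?thesis
    using witness by (auto intro!: rev_image_eqI[OF witness])
qed

definition grid_slab :: "nat \<Rightarrow> nat \<Rightarrow> real \<Rightarrow> nat \<Rightarrow> nat \<Rightarrow> (nat \<Rightarrow> real) set" where
  "grid_slab dx K \<delta> j h =
    PiE {..<dx} (\<lambda>i. if i = j then {real h / 2 ^ K - \<delta> .. real h / 2 ^ K + \<delta>} else {0..1})"

definition near_grid :: "nat \<Rightarrow> nat \<Rightarrow> real \<Rightarrow> (nat \<Rightarrow> real) set" where
  "near_grid dx K \<delta> = PiE {..<dx} (\<lambda>_. {0..1}) \<inter> (\<Union>j<dx. \<Union>h\<le>2 ^ K. grid_slab dx K \<delta> j h)"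

lemma grid_slab_sets: "grid_slab dx K \<delta> j h \<in> sets (PiM {..<dx} (\<lambda>_. lborel))"
  unfolding grid_slab_def by (rule sets_PiM_I_finite) auto

lemma near_grid_sets: "near_grid dx K \<delta> \<in> sets (PiM {..<dx} (\<lambda>_. lborel))"
  unfolding near_grid_def using grid_slab_sets
  by (intro sets.Int sets_PiM_I_finite sets.finite_UN) auto

lemma emeasure_grid_slab:
  assumes "0 < \<delta>" "j < dx"
  shows "emeasure (PiM {..<dx} (\<lambda>_. lborel)) (grid_slab dx K \<delta> j h) = ennreal (2 * \<delta>)"
proof -
  interpret product_sigma_finite "\<lambda>_::nat. lborel :: real measure"
    by standard
  have "emeasure (PiM {..<dx} (\<lambda>_. lborel)) (grid_slab dx K \<delta> j h)
      = (\<Prod>i<dx. emeasure lborel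
          (if i = j then {real h / 2 ^ K - \<delta> .. real h / 2 ^ K + \<delta>} else {0..1::real}))"
    unfolding grid_slab_def by (rule emeasure_PiM) auto
  also have "\<dots> = (\<Prod>i<dx. if i = j then ennreal (2 * \<delta>) else 1)"
    using assms(1) by (intro prod.cong) auto
  finally show ?thesis
    using assms(2) by (simp add: prod.delta)
qed

lemma emeasure_near_grid_le:
  assumes "0 < \<delta>"
  shows "emeasure (PiM {..<dx} (\<lambda>_. lborel)) (near_grid dx K \<delta>)
    \<le> ennreal (real dx * (2 ^ K + 1) * (2 * \<delta>))"
proof -
  let ?\<mu> = "emeasure (PiM {..<dx} (\<lambda>_. lborel))"
  have "?\<mu> (near_grid dx K \<delta>) \<le> ?\<mu> (\<Union>j<dx. \<Union>h\<le>2 ^ K. grid_slab dx K \<delta> j h)"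
    unfolding near_grid_def using grid_slab_sets by (intro emeasure_mono sets.finite_UN) auto
  also have "\<dots> \<le> (\<Sum>j<dx. \<Sum>h\<le>2 ^ K. ?\<mu> (grid_slab dx K \<delta> j h))"
    using grid_slab_sets
    by (intro order_trans[OF emeasure_subadditive_finite] sum_mono emeasure_subadditive_finite)
      (auto intro!: sets.finite_UN)
  also have "\<dots> = ennreal (real dx * (2 ^ K + 1) * (2 * \<delta>))"
    using assms
    by (simp add: emeasure_grid_slab ennreal_mult ennreal_of_nat_eq_real_of_nat mult.assoc add.commute)
  finally show ?thesis .
qed

lemma off_grid_outside_near_grid:
  assumes "x \<in> PiE {..<dx} (\<lambda>_. {0..1}) - near_grid dx K \<delta>" "i < dx"
  shows "off_grid \<delta> K (x i)"
proof -
  have cube: "x \<in> PiE {..<dx} (\<lambda>_. {0..1})" and outside: "x \<notin> near_grid dx K \<delta>"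
    using assms(1) by simp_all
  have "\<delta> < \<bar>x i - real h / 2 ^ K\<bar>" if "h \<le> 2 ^ K" for h
  proof (rule ccontr)
    assume "\<not> \<delta> < \<bar>x i - real h / 2 ^ K\<bar>"
    then have "x i \<in> {real h / 2 ^ K - \<delta> .. real h / 2 ^ K + \<delta>}"
      by (auto simp: not_less abs_le_iff)
    then have "x \<in> grid_slab dx K \<delta> i h"
      using cube unfolding grid_slab_def PiE_iff by simp
    then have "x \<in> near_grid dx K \<delta>"
      unfolding near_grid_def using cube assms(2) that by blast
    then show False
      using outside by simp
  qed
  moreover have "0 \<le> x i" "x i \<le> 1"
    using cube assms(2) by (simp_all add: PiE_iff)
  ultimately show ?thesis
    unfolding off_grid_def by simp
qed

lemma small_grid_tolerance:
  assumes "N > 0" "\<gamma> > 0"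
  obtains \<delta> :: real where "0 < \<delta>" "\<delta> * 2 ^ K \<le> 1" "N * (2 * \<delta>) < \<gamma>"
proof
  let ?\<delta> = "min (1 / 2 ^ K) (\<gamma> / (4 * N))"
  show "0 < ?\<delta>" "?\<delta> * 2 ^ K \<le> 1"
    using assms by (auto simp: min_def field_simps)
  have "?\<delta> * (4 * N) \<le> \<gamma>"
    using assms(1) by (simp add: pos_le_divide_eq[symmetric])
  then show "N * (2 * ?\<delta>) < \<gamma>"
    using assms(2) by (simp add: algebra_simps)
qed

theorem lemma7:
  fixes dx K :: nat and \<gamma> :: real
  assumes "dx \<ge> 1" and "\<gamma> > 0"
  shows "\<exists>ds ls D.
    relu_net dx 1 ds ls \<and> net_width ds = dx + 1 \<and>
    D \<in> sets (PiM {..<dx} (\<lambda>_. lborel)) \<and>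
    D \<subseteq> PiE {..<dx} (\<lambda>_. {0..1}) \<and>
    (\<forall>x \<in> PiE {..<dx} (\<lambda>_. {0..1}) - D. net_eval ds ls x 0 = encode K dx x) \<and>
    emeasure (PiM {..<dx} (\<lambda>_. lborel)) D < ennreal \<gamma> \<and>
    (\<lambda>x. net_eval ds ls x 0) ` D \<subseteq> {0..1} \<and>
    (\<lambda>x. net_eval ds ls x 0) ` (PiE {..<dx} (\<lambda>_. UNIV) - PiE {..<dx} (\<lambda>_. {0..1}))
      = {1 - (1/2) ^ (dx * K)}"
proof -
  have "real dx * (2 ^ K + 1) > 0"
    using assms(1) by (intro mult_pos_pos add_pos_pos) auto
  then obtain \<delta> :: real where \<delta>: "0 < \<delta>" "\<delta> * 2 ^ K \<le> 1"
    and "real dx * (2 ^ K + 1) * (2 * \<delta>) < \<gamma>"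
    using small_grid_tolerance assms(2) by blast
  then have small: "emeasure (PiM {..<dx} (\<lambda>_. lborel)) (near_grid dx K \<delta>) < ennreal \<gamma>"
    using emeasure_near_grid_le[OF \<delta>(1), of dx K] by (simp add: ennreal_less_iff order.strict_trans1)
  have agree: "\<forall>x \<in> PiE {..<dx} (\<lambda>_. {0..1}) - near_grid dx K \<delta>.
      net_eval (encoder_dims dx K \<delta>) (encoder_layers dx K \<delta>) x 0 = encode K dx x"
    by (intro ballI encoder_eq_encode[OF assms(1) \<delta>] allI impI off_grid_outside_near_grid)
  have range: "(\<lambda>x. net_eval (encoder_dims dx K \<delta>) (encoder_layers dx K \<delta>) x 0)
      ` near_grid dx K \<delta> \<subseteq> {0..1}"
    by (intro image_subsetI encoder_range[OF assms(1) \<delta>(1)])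
  have "near_grid dx K \<delta> \<subseteq> PiE {..<dx} (\<lambda>_. {0..1})"
    unfolding near_grid_def by (rule Int_lower1)
  then show ?thesis
    by (intro exI[of _ "encoder_dims dx K \<delta>"] exI[of _ "encoder_layers dx K \<delta>"]
        exI[of _ "near_grid dx K \<delta>"] conjI relu_net_encoder net_width_encoder near_grid_sets
        small agree range encoder_image_outside_cube[OF assms(1) \<delta>])
qed

end
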